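(* For $r, p_{1}, p_{2}\in \mathbb N$, \begin{align*} \sum_{n=1}^\infty \frac{r H_n^{(p_{1})} H_n^{(p_{2})}}{n(n+r)} &=S_{p_{1},p_{2}+1}^{+,+}+S_{p_{2},p_{1}+1}^{+,+}-\zeta(p_{1}+p_{2}+1) +\sum_{b=1}^{r-1}S(p_{1},p_{2},1,b,0)\\ &\quad +\sum_{b=1}^{r-1}S(p_{2},p_{1},1,b,0) -\sum_{b=1}^{r-1}S(0,p_{1}+p_{2}+1,1,b,0)\,. \end{align*}
   Context: $H_n^{(q)}=\sum_{j=1}^n j^{-q}$ for $q\in\mathbb N$, and $H_n^{(0)}:=n$. For $q\in\mathbb Z_{\ge0}$... more precisely for $q\in\{0\}\cup\mathbb N$ and $m,t,b\in\mathbb N$, $S(q,m,t,b,0):=\sum_{n=1}^\infty\frac{H_n^{(q)}}{n^{m}(n+b)^{t}}$ (so $S(0,m,1,b,0)=\sum_{n\ge1}\frac{1}{n^{m-1}(n+b)}$). $S_{p,q}^{+,+}:=\sum_{n=1}^\infty H_n^{(p)}/n^q$. $\zeta$ is the Riemann zeta function. Empty sums are $0$. *)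

theory Defs
  imports "HOL-Analysis.Analysis"
begin

text \<open>Generalized harmonic numbers; by convention H n 0 = n.\<close>
definition harm :: "nat \<Rightarrow> nat \<Rightarrow> real" where
  "harm q n = (if q = 0 then real n else (\<Sum>j=1..n. 1 / (real j) ^ q))"

text \<open>S(q,m,t,b,0) = sum over n>=1 of H_n^(q) / (n^m (n+b)^t).\<close>
definition S5 :: "nat \<Rightarrow> nat \<Rightarrow> nat \<Rightarrow> nat \<Rightarrow> real" where
  "S5 q m t b = (\<Sum>n. harm q (Suc n) / ((real (Suc n)) ^ m * (real (Suc n) + real b) ^ t))"

definition Spp :: "nat \<Rightarrow> nat \<Rightarrow> real" where
  "Spp p q = (\<Sum>n. harm p (Suc n) / (real (Suc n)) ^ q)"

text \<open>Riemann zeta at integer arguments (used only for s >= 2, where the series converges).\<close>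
definition zeta_nat :: "nat \<Rightarrow> real" where
  "zeta_nat s = (\<Sum>n. 1 / (real (Suc n)) ^ s)"

end

theory Submission
  imports Defs "HOL-Real_Asymp.Real_Asymp"
begin

text \<open>
  Partial fractions give r/(n(n+r)) = sum_{b<r} (1/(n+b) - 1/(n+b+1)), so the series splits into
  r series sum_n f(n) (1/(n+b) - 1/(n+b+1)) with f(n) = H_n^(p1) H_n^(p2). Abel summation moves
  the difference onto f, whose increment f(n) - f(n-1) is H_n^(p1)/n^p2 + H_n^(p2)/n^p1 - 1/n^(p1+p2);
  the boundary term f(N)/(N+b+1) vanishes because harmonic numbers grow only logarithmically.
  Dividing the increment by n+b gives the summands of S(p1,p2,1,b,0), S(p2,p1,1,b,0) and
  S(0,p1+p2+1,1,b,0), and for b = 0 these series are the linear Euler sums and zeta(p1+p2+1).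
\<close>

lemma harm_0: "p \<ge> 1 \<Longrightarrow> harm p 0 = 0"
  by (simp add: harm_def)

lemma harm_Suc_eq: "p \<ge> 1 \<Longrightarrow> harm p (Suc n) = harm p n + 1 / real (Suc n) ^ p"
  by (simp add: harm_def)

lemma harm_ge_0: "0 \<le> harm p n"
  by (auto simp: harm_def intro!: sum_nonneg)

lemma harm_le_Harmonic_harm:
  assumes "p \<ge> 1"
  shows "harm p n \<le> Harmonic_Numbers.harm n"
proof -
  have "1 / real j ^ p \<le> inverse (real j)" if "j \<in> {1..n}" for j
  proof -
    have "real j \<le> real j ^ p" using that assms by (simp add: self_le_power)
    then show ?thesis using that by (simp add: divide_inverse le_imp_inverse_le)
  qed
  then show ?thesis
    using assms by (auto simp: harm_def Harmonic_Numbers.harm_def intro!: sum_mono)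
qed

lemma harm_le_ln:
  assumes "p \<ge> 1"
  shows "harm p n \<le> ln (real n + 1) + 1"
proof (cases "n = 0")
  case True
  then show ?thesis using assms by (simp add: harm_0)
next
  case False
  have "Harmonic_Numbers.harm n - ln (real n) \<le> (Harmonic_Numbers.harm 1 - ln 1 :: real)"
    using euler_mascheroni_sequence_decreasing[of 1 n] False by simp
  moreover have "ln (real n) \<le> ln (real n + 1)" using False by simp
  ultimately show ?thesis
    using harm_le_Harmonic_harm[OF assms, of n] by (simp add: Harmonic_Numbers.harm_def)
qed

lemma harm_product_diff:
  assumes "p1 \<ge> 1" "p2 \<ge> 1"
  shows "harm p1 (Suc n) * harm p2 (Suc n) - harm p1 n * harm p2 n
       = harm p1 (Suc n) / real (Suc n) ^ p2 + harm p2 (Suc n) / real (Suc n) ^ p1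
         - 1 / real (Suc n) ^ (p1 + p2)"
  using assms by (simp add: harm_Suc_eq field_simps power_add)

lemma tendsto_harm_product_div_linear:
  assumes "p1 \<ge> 1" "p2 \<ge> 1"
  shows "(\<lambda>n. harm p1 n * harm p2 n / (real n + real b + 1)) \<longlonglongrightarrow> 0"
proof (rule tendsto_sandwich[of "\<lambda>_. 0" _ _ "\<lambda>n. (ln (real n + 1) + 1) ^ 2 / (real n + 1)"])
  have "harm p1 n * harm p2 n \<le> (ln (real n + 1) + 1) ^ 2" for n
    unfolding power2_eq_square by (intro mult_mono harm_le_ln harm_ge_0 assms) auto
  then show "\<forall>\<^sub>F n in sequentially. harm p1 n * harm p2 n / (real n + real b + 1)
      \<le> (ln (real n + 1) + 1) ^ 2 / (real n + 1)"
    by (intro always_eventually allI frac_le) (auto intro: mult_nonneg_nonneg harm_ge_0)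
  show "(\<lambda>n. (ln (real n + 1) + 1) ^ 2 / (real n + 1)) \<longlonglongrightarrow> 0"
    by real_asymp
qed (auto intro!: always_eventually divide_nonneg_pos mult_nonneg_nonneg harm_ge_0)

lemma sums_summation_by_parts:
  fixes f g :: "nat \<Rightarrow> 'a :: real_normed_algebra"
  assumes "f 0 = 0"
    and "(\<lambda>n. (f (Suc n) - f n) * g n) sums s"
    and "(\<lambda>n. f n * g n) \<longlonglongrightarrow> 0"
  shows "(\<lambda>n. f (Suc n) * (g n - g (Suc n))) sums s"
proof -
  have partial_sums: "(\<Sum>n<N. f (Suc n) * (g n - g (Suc n)))
      = (\<Sum>n<N. (f (Suc n) - f n) * g n) - f N * g N" for N
    by (induction N) (use assms(1) in \<open>simp_all add: algebra_simps\<close>)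
  have "(\<lambda>N. (\<Sum>n<N. (f (Suc n) - f n) * g n) - f N * g N) \<longlonglongrightarrow> s - 0"
    using assms(2,3) unfolding sums_def by (rule tendsto_diff)
  then show ?thesis
    unfolding sums_def partial_sums by simp
qed

definition S5_term :: "nat \<Rightarrow> nat \<Rightarrow> nat \<Rightarrow> nat \<Rightarrow> nat \<Rightarrow> real" where
  "S5_term q m t b n = harm q (Suc n) / (real (Suc n) ^ m * (real (Suc n) + real b) ^ t)"

lemma S5_eq_suminf: "S5 q m t b = suminf (S5_term q m t b)"
  unfolding S5_def S5_term_def[abs_def] ..

lemma S5_term_nonneg: "0 \<le> S5_term q m t b n"
  by (simp add: S5_term_def harm_ge_0)

lemma S5_term_le: "S5_term q m t b n \<le> harm q (Suc n) / real (Suc n) ^ (m + t)"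
proof -
  have "real (Suc n) ^ t \<le> (real (Suc n) + real b) ^ t"
    by (intro power_mono) auto
  then have "real (Suc n) ^ (m + t) \<le> real (Suc n) ^ m * (real (Suc n) + real b) ^ t"
    by (simp add: power_add)
  then show ?thesis
    unfolding S5_term_def by (intro divide_left_mono harm_ge_0) auto
qed

lemma summable_S5_term:
  assumes "q \<ge> 1" "m + t \<ge> 2"
  shows "summable (S5_term q m t b)"
proof (rule summable_comparison_test)
  let ?h = "\<lambda>n. (ln (real n + 2) + 1) / real (Suc n) ^ 2"
  have "summable (\<lambda>n. norm (real n powr (-3/2)))"
    by (simp add: summable_real_powr_iff)
  moreover have "?h \<in> O(\<lambda>n. real n powr (-3/2))"
    by real_asymp
  ultimately show "summable ?h"
    by (rule summable_comparison_test_bigo)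
  show "\<exists>N. \<forall>n\<ge>N. norm (S5_term q m t b n) \<le> ?h n"
  proof (intro exI allI impI)
    fix n
    have "real (Suc n) ^ 2 \<le> real (Suc n) ^ (m + t)"
      using assms(2) by (intro power_increasing) auto
    then have "harm q (Suc n) / real (Suc n) ^ (m + t) \<le> harm q (Suc n) / real (Suc n) ^ 2"
      by (intro divide_left_mono harm_ge_0) auto
    also have "\<dots> \<le> ?h n"
      using harm_le_ln[OF assms(1), of "Suc n"] by (intro divide_right_mono) (auto simp: add_ac)
    finally show "norm (S5_term q m t b n) \<le> ?h n"
      using S5_term_le[of q m t b n] S5_term_nonneg[of q m t b n] by simp
  qed
qed

lemma summable_S5_term_harm_0:
  assumes "m + t \<ge> 3"
  shows "summable (S5_term 0 m t b)"
proof (rule summable_comparison_test)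
  show "summable (\<lambda>n. inverse (real (Suc n) ^ 2))"
    by (subst summable_Suc_iff) (rule inverse_power_summable, simp)
  show "\<exists>N. \<forall>n\<ge>N. norm (S5_term 0 m t b n) \<le> inverse (real (Suc n) ^ 2)"
  proof (intro exI allI impI)
    fix n
    have "real (Suc n) ^ 3 \<le> real (Suc n) ^ (m + t)"
      using assms by (intro power_increasing) auto
    then have "harm 0 (Suc n) / real (Suc n) ^ (m + t) \<le> real (Suc n) / real (Suc n) ^ 3"
      by (simp add: harm_def divide_left_mono)
    also have "\<dots> = inverse (real (Suc n) ^ 2)"
      by (simp add: eval_nat_numeral field_simps del: of_nat_Suc)
    finally show "norm (S5_term 0 m t b n) \<le> inverse (real (Suc n) ^ 2)"
      using S5_term_le[of 0 m t b n] S5_term_nonneg[of 0 m t b n] by simp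
  qed
qed

lemma S5_0_eq_Spp: "S5 p m 1 0 = Spp p (m + 1)"
  by (simp add: S5_def Spp_def mult.commute)

lemma S5_harm_0_0_eq_zeta_nat: "S5 0 m 1 0 = zeta_nat m"
  unfolding S5_def zeta_nat_def harm_def by (simp del: of_nat_Suc)

lemma harm_product_telescope_sums:
  assumes "p1 \<ge> 1" "p2 \<ge> 1"
  shows "(\<lambda>n. harm p1 (Suc n) * harm p2 (Suc n)
             * (1 / (real (Suc n) + real b) - 1 / (real (Suc n) + real b + 1)))
           sums (S5 p1 p2 1 b + S5 p2 p1 1 b - S5 0 (p1 + p2 + 1) 1 b)"
proof -
  define f where "f n = harm p1 n * harm p2 n" for n
  define g where "g n = 1 / (real n + real b + 1)" for n
  have increment: "(f (Suc n) - f n) * g n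
      = S5_term p1 p2 1 b n + S5_term p2 p1 1 b n - S5_term 0 (p1 + p2 + 1) 1 b n" for n
  proof -
    define x where "x = real (Suc n)"
    have "x > 0" by (simp add: x_def)
    have "g n = 1 / (x + real b)"
      by (simp add: g_def x_def)
    moreover have "S5_term 0 (p1 + p2 + 1) 1 b n = 1 / (x ^ (p1 + p2) * (x + real b))"
      unfolding S5_term_def harm_def x_def[symmetric] using \<open>x > 0\<close> by simp
    ultimately show ?thesis
      unfolding f_def harm_product_diff[OF assms] S5_term_def x_def[symmetric]
      by (simp add: diff_divide_distrib add_divide_distrib)
  qed
  have "(\<lambda>n. (f (Suc n) - f n) * g n) sums (S5 p1 p2 1 b + S5 p2 p1 1 b - S5 0 (p1 + p2 + 1) 1 b)"
    unfolding increment S5_eq_suminf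
    using assms by (intro sums_diff sums_add summable_sums summable_S5_term summable_S5_term_harm_0) auto
  moreover have "(\<lambda>n. f n * g n) \<longlonglongrightarrow> 0"
    using tendsto_harm_product_div_linear[OF assms, of b] by (simp add: f_def g_def)
  ultimately have "(\<lambda>n. f (Suc n) * (g n - g (Suc n)))
      sums (S5 p1 p2 1 b + S5 p2 p1 1 b - S5 0 (p1 + p2 + 1) 1 b)"
    using harm_0 assms by (intro sums_summation_by_parts) (auto simp: f_def)
  then show ?thesis
    by (simp add: f_def g_def add_ac)
qed

lemma divide_mult_add_eq_sum_telescope:
  fixes x :: real
  assumes "x > 0"
  shows "real r / (x * (x + real r)) = (\<Sum>b<r. 1 / (x + real b) - 1 / (x + real b + 1))"
proof -
  have "(\<Sum>b<r. 1 / (x + real b) - 1 / (x + real b + 1)) = 1 / x - 1 / (x + real r)"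
    using sum_lessThan_telescope'[of "\<lambda>b. 1 / (x + real b)" r] by (simp add: add_ac)
  also have "\<dots> = real r / (x * (x + real r))"
    using assms by (simp add: field_simps)
  finally show ?thesis by simp
qed

theorem lemma7:
  fixes r p1 p2 :: nat
  assumes "r \<ge> 1" and "p1 \<ge> 1" and "p2 \<ge> 1"
  shows "(\<Sum>n. real r * harm p1 (Suc n) * harm p2 (Suc n)
              / (real (Suc n) * (real (Suc n) + real r)))
       = Spp p1 (p2 + 1) + Spp p2 (p1 + 1) - zeta_nat (p1 + p2 + 1)
         + (\<Sum>b=1..r-1. S5 p1 p2 1 b)
         + (\<Sum>b=1..r-1. S5 p2 p1 1 b)
         - (\<Sum>b=1..r-1. S5 0 (p1 + p2 + 1) 1 b)"
proof -
  let ?T = "\<lambda>b. S5 p1 p2 1 b + S5 p2 p1 1 b - S5 0 (p1 + p2 + 1) 1 b"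
  have "real r * harm p1 (Suc n) * harm p2 (Suc n) / (real (Suc n) * (real (Suc n) + real r))
      = (\<Sum>b<r. harm p1 (Suc n) * harm p2 (Suc n)
                 * (1 / (real (Suc n) + real b) - 1 / (real (Suc n) + real b + 1)))" for n
    by (subst sum_distrib_left[symmetric], subst divide_mult_add_eq_sum_telescope[symmetric]) auto
  then have "(\<lambda>n. real r * harm p1 (Suc n) * harm p2 (Suc n)
              / (real (Suc n) * (real (Suc n) + real r))) sums (\<Sum>b<r. ?T b)"
    using harm_product_telescope_sums[OF assms(2,3)] by (simp add: sums_sum)
  then have "(\<Sum>n. real r * harm p1 (Suc n) * harm p2 (Suc n)
              / (real (Suc n) * (real (Suc n) + real r))) = (\<Sum>b<r. ?T b)"
    by (simp add: sums_iff)
  also have "\<dots> = ?T 0 + (\<Sum>b=1..r-1. ?T b)"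
  proof -
    have "{..<r} = insert 0 {1..r-1}"
      using assms(1) by auto
    then show ?thesis by simp
  qed
  also have "?T 0 = Spp p1 (p2 + 1) + Spp p2 (p1 + 1) - zeta_nat (p1 + p2 + 1)"
    by (simp only: S5_0_eq_Spp[of p1] S5_0_eq_Spp[of p2] S5_harm_0_0_eq_zeta_nat)
  finally show ?thesis
    by (simp add: sum.distrib sum_subtractf)
qed

end
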